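(* Let $G$ be a graph and let $A$ and $B$ be disjoint subsets of $V(G)$ such that every vertex of $A$ is adjacent in $G$ to every vertex of $B$. Let $P_A$ be a path in $G[A]$ and $P_B$ a path in $G[B]$, both non-empty. If \[|B\setminus V(P_B)|\le |A\setminus V(P_A)|\le |B|-1,\] then $G[A\cup B]$ has a cycle whose vertex set is $A\cup B$.
   Context: Paths may consist of a single vertex. A single vertex and a single edge are also considered to be cycles. *)

theory Defs
  imports Main
begin

definition graph :: "'a set \<Rightarrow> ('a \<Rightarrow> 'a \<Rightarrow> bool) \<Rightarrow> bool" where
  "graph V E \<longleftrightarrow> finite V \<and> (\<forall>x y. E x y \<longrightarrow> x \<in> V \<and> y \<in> V)
     \<and> (\<forall>x y. E x y \<longrightarrow> E y x) \<and> (\<forall>x. \<not> E x x)"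

definition path_in :: "('a \<Rightarrow> 'a \<Rightarrow> bool) \<Rightarrow> 'a set \<Rightarrow> 'a list \<Rightarrow> bool" where
  "path_in E S xs \<longleftrightarrow> xs \<noteq> [] \<and> distinct xs \<and> set xs \<subseteq> S
     \<and> (\<forall>i. Suc i < length xs \<longrightarrow> E (xs ! i) (xs ! Suc i))"

text \<open>A single vertex and a single edge count as cycles; for three or more vertices
  the closing edge from the last to the first vertex is required.\<close>
definition cycle_in :: "('a \<Rightarrow> 'a \<Rightarrow> bool) \<Rightarrow> 'a set \<Rightarrow> 'a list \<Rightarrow> bool" where
  "cycle_in E S xs \<longleftrightarrow> path_in E S xs \<and> (3 \<le> length xs \<longrightarrow> E (last xs) (hd xs))"

end

theory Submission
  imports Defs
begin

text \<open>Let \<open>a\<^sub>1,\<dots>,a\<^sub>k\<close> list \<open>A - V(P\<^sub>A)\<close> and \<open>b\<^sub>1,\<dots>,b\<^sub>l\<close> list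
  \<open>B - V(P\<^sub>B)\<close>, and put \<open>m = k - l\<close>; the hypotheses say exactly that \<open>m < |V(P\<^sub>B)|\<close>.
  Split \<open>P\<^sub>B = c\<^sub>1\<dots>c\<^sub>m Q\<close> with \<open>Q\<close> non-empty. Since all \<open>A\<close>-\<open>B\<close> edges are present,
  \<open>P\<^sub>A Q a\<^sub>1 c\<^sub>1 \<dots> a\<^sub>m c\<^sub>m a\<^sub>m\<^sub>+\<^sub>1 b\<^sub>1 \<dots> a\<^sub>k b\<^sub>l\<close> is a Hamiltonian cycle of
  \<open>G[A \<union> B]\<close>: it starts in \<open>A\<close> and ends in \<open>B\<close>.\<close>

fun interleave :: "'a list \<Rightarrow> 'a list \<Rightarrow> 'a list" where
  "interleave (x # xs) (y # ys) = x # y # interleave xs ys"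
| "interleave _ _ = []"

lemma set_interleave:
  "length xs = length ys \<Longrightarrow> set (interleave xs ys) = set xs \<union> set ys"
  by (induction xs ys rule: interleave.induct) auto

lemma distinct_interleave:
  "\<lbrakk>length xs = length ys; distinct xs; distinct ys; set xs \<inter> set ys = {}\<rbrakk>
    \<Longrightarrow> distinct (interleave xs ys)"
  by (induction xs ys rule: interleave.induct) (auto simp: set_interleave)

lemma hd_interleave: "interleave xs ys \<noteq> [] \<Longrightarrow> hd (interleave xs ys) \<in> set xs"
  by (induction xs ys rule: interleave.induct) auto

lemma last_interleave: "interleave xs ys \<noteq> [] \<Longrightarrow> last (interleave xs ys) \<in> set ys"
  by (induction xs ys rule: interleave.induct) auto

lemma successively_interleave:
  assumes "\<forall>x\<in>A. \<forall>y\<in>B. E x y \<and> E y x" and "set xs \<subseteq> A" and "set ys \<subseteq> B"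
  shows "successively E (interleave xs ys)"
  using assms(2,3)
proof (induction xs ys rule: interleave.induct)
  case (1 x xs y ys)
  then have "interleave xs ys \<noteq> [] \<Longrightarrow> E y (hd (interleave xs ys))"
    using hd_interleave[of xs ys] assms(1) by auto
  with 1 assms(1) show ?case by (auto simp: successively_Cons)
qed auto

lemma path_in_iff_successively:
  "path_in E S xs \<longleftrightarrow> xs \<noteq> [] \<and> distinct xs \<and> set xs \<subseteq> S \<and> successively E xs"
  unfolding path_in_def successively_conv_nth by auto

lemma path_in_drop:
  assumes "path_in E S xs" and "m < length xs"
  shows "path_in E S (drop m xs)"
  using assms unfolding path_in_iff_successively
  by (metis append_take_drop_id distinct_drop drop_eq_Nil2 in_set_dropD linorder_not_less
      subset_iff successively_append_iff)

lemma card_eq_length_plus_card_Diff: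
  assumes "finite S" and "distinct xs" and "set xs \<subseteq> S"
  shows "card S = length xs + card (S - set xs)"
  using assms card_Diff_subset[of "set xs" S] card_mono[of S "set xs"]
  by (simp add: distinct_card)

lemma cycle_in_append_interleave:
  assumes AB: "\<forall>x\<in>A. \<forall>y\<in>B. E x y \<and> E y x" and "A \<inter> B = {}"
    and P: "path_in E A P" and Q: "path_in E B Q"
    and "set xs \<subseteq> A" and "set ys \<subseteq> B" and len: "length xs = length ys"
    and "distinct (P @ xs)" and "distinct (Q @ ys)"
  shows "cycle_in E (A \<union> B) (P @ Q @ interleave xs ys)"
proof -
  let ?I = "interleave xs ys"
  have P': "P \<noteq> []" "distinct P" "set P \<subseteq> A" "successively E P"
    and Q': "Q \<noteq> []" "distinct Q" "set Q \<subseteq> B" "successively E Q"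
    using P Q unfolding path_in_iff_successively by auto
  have "successively E ?I"
    using successively_interleave AB assms(5,6) by blast
  moreover have "?I \<noteq> [] \<Longrightarrow> E (last Q) (hd ?I)"
    using hd_interleave[of xs ys] AB assms(5) Q' by (meson last_in_set subsetD)
  ultimately have "successively E (Q @ ?I)"
    using Q' by (auto simp: successively_append_iff)
  moreover have "E (last P) (hd Q)"
    using AB P' Q' by (meson hd_in_set last_in_set subsetD)
  ultimately have succ: "successively E (P @ Q @ ?I)"
    using P' Q' by (simp add: successively_append_iff)
  have "distinct ?I"
    using distinct_interleave[OF len] assms(2,5,6,8,9) by auto
  then have dist: "distinct (P @ Q @ ?I)"
    using set_interleave[OF len] assms(2,5,6,8,9) P' Q' by auto
  have "last (P @ Q @ ?I) \<in> B"
    using last_interleave[of xs ys] assms(6) Q' by (auto simp: last_append)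
  then have close: "E (last (P @ Q @ ?I)) (hd (P @ Q @ ?I))"
    using AB P' by (simp add: subset_iff)
  have "set (P @ Q @ ?I) \<subseteq> A \<union> B"
    using set_interleave[OF len] assms(5,6) P' Q' by auto
  then show ?thesis
    using succ dist close P' unfolding cycle_in_def path_in_iff_successively by simp
qed

theorem lemma3p3:
  fixes V :: "'a set" and E :: "'a \<Rightarrow> 'a \<Rightarrow> bool"
    and A B :: "'a set" and PA PB :: "'a list"
  assumes "graph V E"
    and "A \<subseteq> V" and "B \<subseteq> V" and "A \<inter> B = {}"
    and "\<forall>a\<in>A. \<forall>b\<in>B. E a b"
    and "path_in E A PA" and "path_in E B PB"
    and "card (B - set PB) \<le> card (A - set PA)"
    and "card (A - set PA) \<le> card B - 1"
  shows "\<exists>C. cycle_in E (A \<union> B) C \<and> set C = A \<union> B"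
proof -
  have fin: "finite A" "finite B"
    using assms(1-3) finite_subset unfolding graph_def by auto
  have AB: "\<forall>x\<in>A. \<forall>y\<in>B. E x y \<and> E y x"
    using assms(1,5) unfolding graph_def by blast
  have PA: "distinct PA" "set PA \<subseteq> A" and PB: "PB \<noteq> []" "distinct PB" "set PB \<subseteq> B"
    using assms(6,7) unfolding path_in_def by auto
  obtain as where as: "set as = A - set PA" "distinct as"
    using finite_distinct_list[of "A - set PA"] fin by auto
  obtain bs where bs: "set bs = B - set PB" "distinct bs"
    using finite_distinct_list[of "B - set PB"] fin by auto
  have "length as = card (A - set PA)" "length bs = card (B - set PB)"
    using as bs by (metis distinct_card)+
  moreover have "card B = length PB + card (B - set PB)" "0 < length PB"
    using card_eq_length_plus_card_Diff fin(2) PB by auto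
  ultimately obtain m where m: "m < length PB" "length as = m + length bs"
    using assms(8,9) by (intro that[of "length as - length bs"]) linarith+
  define cs where "cs = take m PB @ bs"
  have split: "distinct (take m PB)" "distinct (drop m PB)"
    "set (take m PB) \<inter> set (drop m PB) = {}" "set PB = set (take m PB) \<union> set (drop m PB)"
    using PB(2) distinct_append[of "take m PB" "drop m PB"] set_append[of "take m PB" "drop m PB"]
    by simp_all
  have "cycle_in E (A \<union> B) (PA @ drop m PB @ interleave as cs)"
    by (rule cycle_in_append_interleave[OF AB assms(4,6) path_in_drop[OF assms(7) m(1)]])
      (use as bs PA PB m split in \<open>auto simp: cs_def\<close>)
  moreover have "set (PA @ drop m PB @ interleave as cs) = A \<union> B"
    using set_interleave[of as cs] m as bs PA PB split unfolding cs_def by auto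
  ultimately show ?thesis by blast
qed

end
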